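(* Let $A\in\mathbb{C}^{p\times p}$ and $C\in\mathbb{C}^{q\times q}$ be Hermitian positive semidefinite, let $B\in\mathbb{C}^{p\times q}$, and let $H=\begin{bmatrix} A & B\\ B^* & -C\end{bmatrix}$. For every $t>0$, the null-space of $H$ coincides with the null-space of the matrix obtained from $H$ by replacing $A$ by $tA$; likewise for the matrix obtained by replacing $B$ by $tB$ (and $B^*$ by $tB^*$), and for the matrix obtained by replacing $C$ by $tC$. *)

theory Defs
  imports "Jordan_Normal_Form.Schur_Decomposition" "Jordan_Normal_Form.Matrix_Kernel"
begin

definition hermitian_mat :: "complex mat \<Rightarrow> bool" where
  "hermitian_mat A \<longleftrightarrow> dim_row A = dim_col A \<and>
     (\<forall>i < dim_row A. \<forall>j < dim_row A. A $$ (i, j) = cnj (A $$ (j, i)))"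

definition psd_mat :: "complex mat \<Rightarrow> bool" where
  "psd_mat A \<longleftrightarrow> hermitian_mat A \<and>
     (\<forall>v \<in> carrier_vec (dim_row A).
        0 \<le> Re (\<Sum>i < dim_row A. cnj (v $ i) * (A *\<^sub>v v) $ i))"

definition saddle_mat :: "complex mat \<Rightarrow> complex mat \<Rightarrow> complex mat \<Rightarrow> complex mat" where
  "saddle_mat A B C = four_block_mat A B (mat_adjoint B) (- C)"

end

theory Submission
  imports Defs
begin

text \<open>The null-space of the saddle-point matrix consists exactly of the vectors \<open>(x, y)\<close> with
  \<open>A x = 0\<close>, \<open>B y = 0\<close>, \<open>B\<^sup>* x = 0\<close> and \<open>C y = 0\<close>, a description that does not change when
  one of \<open>A\<close>, \<open>B\<close>, \<open>C\<close> is multiplied by \<open>t > 0\<close>. For the nontrivial inclusion, pair the block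
  equations \<open>A x + B y = 0\<close> and \<open>B\<^sup>* x = C y\<close> with \<open>x\<close> and \<open>y\<close>: the two cross terms are complex
  conjugates, so the real parts of \<open>x\<^sup>* A x\<close> and \<open>y\<^sup>* C y\<close> sum to zero. Both are nonnegative,
  hence zero, and for a positive semidefinite matrix a vanishing quadratic form at \<open>x\<close> forces
  \<open>A x = 0\<close>.\<close>

lemma mult_smult_mat_vec:
  fixes M :: "'a :: comm_semiring_0 mat"
  assumes "M \<in> carrier_mat n m" and "x \<in> carrier_vec m"
  shows "(c \<cdot>\<^sub>m M) *\<^sub>v x = c \<cdot>\<^sub>v (M *\<^sub>v x)"
  using assms by (intro eq_vecI) (auto simp: scalar_prod_def sum_distrib_left ac_simps)

lemma smult_vec_eq_0_iff:
  fixes v :: "'a :: semiring_no_zero_divisors vec"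
  assumes "c \<noteq> 0" and "v \<in> carrier_vec n"
  shows "c \<cdot>\<^sub>v v = 0\<^sub>v n \<longleftrightarrow> v = 0\<^sub>v n"
  using assms by (auto simp: vec_eq_iff)

lemma smult_mat_mult_vec_eq_0_iff:
  fixes M :: "'a :: {comm_semiring_0, semiring_no_zero_divisors} mat"
  assumes "c \<noteq> 0" and "M \<in> carrier_mat n m" and "x \<in> carrier_vec m"
  shows "(c \<cdot>\<^sub>m M) *\<^sub>v x = 0\<^sub>v n \<longleftrightarrow> M *\<^sub>v x = 0\<^sub>v n"
  using assms by (simp add: mult_smult_mat_vec smult_vec_eq_0_iff)

lemma mat_adjoint_carrier:
  "B \<in> carrier_mat m n \<Longrightarrow> mat_adjoint B \<in> carrier_mat n m"
  unfolding mat_adjoint_def by auto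

lemma index_mat_adjoint:
  "B \<in> carrier_mat m n \<Longrightarrow> i < n \<Longrightarrow> j < m \<Longrightarrow> mat_adjoint B $$ (i, j) = conjugate (B $$ (j, i))"
  unfolding mat_adjoint_def by (simp add: mat_of_rows_index)

lemma mat_adjoint_smult:
  assumes "B \<in> carrier_mat m n"
  shows "mat_adjoint (c \<cdot>\<^sub>m B) = conjugate c \<cdot>\<^sub>m mat_adjoint B"
proof -
  have cB: "c \<cdot>\<^sub>m B \<in> carrier_mat m n" using assms by simp
  show ?thesis
    using assms mat_adjoint_carrier[OF assms] mat_adjoint_carrier[OF cB]
    by (intro eq_matI) (auto simp: index_mat_adjoint[OF cB] index_mat_adjoint[OF assms] conjugate_dist_mul)
qed

lemma cscalar_prod_mat_adjoint:
  fixes B :: "'a :: conjugatable_field mat"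
  assumes B: "B \<in> carrier_mat m n" and x: "x \<in> carrier_vec m" and y: "y \<in> carrier_vec n"
  shows "(B *\<^sub>v y) \<bullet>c x = y \<bullet>c (mat_adjoint B *\<^sub>v x)"
proof -
  have "(B *\<^sub>v y) \<bullet>c x = (\<Sum>i<m. \<Sum>j<n. B $$ (i, j) * y $ j * conjugate (x $ i))"
    using B x y by (simp add: scalar_prod_def atLeast0LessThan sum_distrib_right)
  also have "\<dots> = (\<Sum>j<n. \<Sum>i<m. y $ j * (B $$ (i, j) * conjugate (x $ i)))"
    by (subst sum.swap) (simp add: ac_simps)
  also have "\<dots> = y \<bullet>c (mat_adjoint B *\<^sub>v x)"
    using B x y mat_adjoint_carrier[OF B]
    by (simp add: scalar_prod_def atLeast0LessThan sum_distrib_left index_mat_adjoint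
        sum_conjugate conjugate_dist_mul)
  finally show ?thesis .
qed

lemma hermitian_mat_iff_mat_adjoint:
  assumes A: "A \<in> carrier_mat n n"
  shows "hermitian_mat A \<longleftrightarrow> mat_adjoint A = A"
proof
  assume herm: "hermitian_mat A"
  have "mat_adjoint A $$ (i, j) = A $$ (i, j)" if "i < n" "j < n" for i j
  proof -
    have "A $$ (i, j) = cnj (A $$ (j, i))"
      using herm A that unfolding hermitian_mat_def by blast
    then show ?thesis using index_mat_adjoint[OF A that] by simp
  qed
  then show "mat_adjoint A = A"
    using A mat_adjoint_carrier[OF A] by (intro eq_matI) auto
next
  assume adj: "mat_adjoint A = A"
  have "A $$ (i, j) = cnj (A $$ (j, i))" if "i < n" "j < n" for i j
    using index_mat_adjoint[OF A that] adj by simp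
  then show "hermitian_mat A" using A unfolding hermitian_mat_def by blast
qed

lemma psd_mat_iff:
  assumes "A \<in> carrier_mat n n"
  shows "psd_mat A \<longleftrightarrow> hermitian_mat A \<and> (\<forall>v \<in> carrier_vec n. 0 \<le> Re ((A *\<^sub>v v) \<bullet>c v))"
proof -
  have "(\<Sum>i<n. cnj (v $ i) * (A *\<^sub>v v) $ i) = (A *\<^sub>v v) \<bullet>c v" if "v \<in> carrier_vec n" for v
    using assms that by (simp add: scalar_prod_def atLeast0LessThan mult.commute)
  then show ?thesis using assms unfolding psd_mat_def by auto
qed

lemma psd_mat_smult:
  assumes A: "A \<in> carrier_mat n n" and "psd_mat A" and "t \<ge> 0"
  shows "psd_mat (complex_of_real t \<cdot>\<^sub>m A)"
proof -
  have tA: "complex_of_real t \<cdot>\<^sub>m A \<in> carrier_mat n n" using A by simp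
  have "0 \<le> Re (((complex_of_real t \<cdot>\<^sub>m A) *\<^sub>v v) \<bullet>c v)" if v: "v \<in> carrier_vec n" for v
  proof -
    have "0 \<le> Re ((A *\<^sub>v v) \<bullet>c v)" using assms v psd_mat_iff by blast
    then show ?thesis using A v \<open>t \<ge> 0\<close> by (simp add: mult_smult_mat_vec)
  qed
  moreover have "hermitian_mat (complex_of_real t \<cdot>\<^sub>m A)"
    using assms hermitian_mat_iff_mat_adjoint[OF A] hermitian_mat_iff_mat_adjoint[OF tA]
    by (simp add: psd_mat_iff mat_adjoint_smult)
  ultimately show ?thesis using psd_mat_iff[OF tA] by blast
qed

lemma linear_coeff_eq_0_if_quadratic_nonneg:
  fixes a b :: real
  assumes "\<And>s. 0 \<le> a * s + b * s\<^sup>2"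
  shows "a = 0"
proof (rule ccontr)
  assume "a \<noteq> 0"
  define k where "k = 1 / (\<bar>b\<bar> + 1)"
  have k: "k > 0" "b * k < 1" unfolding k_def by (auto simp: field_simps)
  have "a * (- a * k) + b * (- a * k)\<^sup>2 = a\<^sup>2 * k * (b * k - 1)"
    by (simp add: power2_eq_square algebra_simps)
  also have "\<dots> < 0" using k \<open>a \<noteq> 0\<close> by (intro mult_pos_neg) auto
  finally show False using assms[of "- a * k"] by linarith
qed

lemma psd_mat_mult_vec_eq_0:
  assumes A: "A \<in> carrier_mat n n" and psd: "psd_mat A" and x: "x \<in> carrier_vec n"
    and form_0: "Re ((A *\<^sub>v x) \<bullet>c x) = 0"
  shows "A *\<^sub>v x = 0\<^sub>v n"
proof -
  define y where "y = A *\<^sub>v x"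
  have y: "y \<in> carrier_vec n" using A x by (simp add: y_def)
  have adj: "mat_adjoint A = A" using psd A by (simp add: psd_mat_iff hermitian_mat_iff_mat_adjoint)
  have Ay_x: "(A *\<^sub>v y) \<bullet>c x = y \<bullet>c y"
    using cscalar_prod_mat_adjoint[OF A x y] adj by (simp add: y_def)
  \<comment> \<open>The form at \<open>x + s A x\<close> is \<open>2 s |A x|\<^sup>2 + O(s\<^sup>2)\<close>; nonnegativity for all real \<open>s\<close> needs \<open>A x = 0\<close>.\<close>
  have "0 \<le> 2 * Re (y \<bullet>c y) * s + Re ((A *\<^sub>v y) \<bullet>c y) * s\<^sup>2" for s :: real
  proof -
    define w where "w = x + complex_of_real s \<cdot>\<^sub>v y"
    have w: "w \<in> carrier_vec n" using x y by (simp add: w_def)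
    have Ay: "A *\<^sub>v y \<in> carrier_vec n" using A y by simp
    have "A *\<^sub>v w = y + complex_of_real s \<cdot>\<^sub>v (A *\<^sub>v y)"
      using A x y by (simp add: w_def y_def[symmetric] mult_add_distrib_mat_vec mult_mat_vec)
    moreover have "conjugate w = conjugate x + complex_of_real s \<cdot>\<^sub>v conjugate y"
      using x y by (simp add: w_def conjugate_add_vec[of _ n] conjugate_smult_vec)
    ultimately have "(A *\<^sub>v w) \<bullet>c w = y \<bullet>c x + 2 * complex_of_real s * (y \<bullet>c y)
        + (complex_of_real s)\<^sup>2 * ((A *\<^sub>v y) \<bullet>c y)"
      using x y Ay Ay_x
      by (simp add: add_scalar_prod_distrib[of _ n] scalar_prod_add_distrib[of _ n] algebra_simps
          power2_eq_square)
    then have "Re ((A *\<^sub>v w) \<bullet>c w) = 2 * Re (y \<bullet>c y) * s + Re ((A *\<^sub>v y) \<bullet>c y) * s\<^sup>2"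
      using form_0 by (simp add: y_def power2_eq_square)
    then show ?thesis using psd w psd_mat_iff[OF A] by auto
  qed
  then have "2 * Re (y \<bullet>c y) = 0" by (rule linear_coeff_eq_0_if_quadratic_nonneg)
  moreover have "Im (y \<bullet>c y) = 0"
    using conjugate_square_ge_0_vec[of y] by (simp add: less_eq_complex_def)
  ultimately have "y \<bullet>c y = 0" by (simp add: complex_eq_iff)
  then have "y = 0\<^sub>v n" using conjugate_square_eq_0_vec[OF y] by blast
  then show ?thesis by (simp add: y_def)
qed

lemma cscalar_prod_swap:
  fixes v w :: "'a :: {conjugatable_ring, comm_ring} vec"
  assumes "v \<in> carrier_vec n" and "w \<in> carrier_vec n"
  shows "v \<bullet>c w = conjugate (w \<bullet>c v)"
  using assms by (simp add: conjugate_sprod_vec[of _ n] comm_scalar_prod[of _ n])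

lemma minus_vec_eq_0_iff:
  fixes v w :: "'a :: ab_group_add vec"
  assumes "v \<in> carrier_vec n" and "w \<in> carrier_vec n"
  shows "v - w = 0\<^sub>v n \<longleftrightarrow> v = w"
  using assms by (auto simp: vec_eq_iff)

lemma append_zero_vec: "0\<^sub>v n @\<^sub>v 0\<^sub>v m = (0\<^sub>v (n + m) :: 'a :: zero vec)"
  by (intro eq_vecI) auto

lemma saddle_mat_carrier:
  assumes "A \<in> carrier_mat p p" and "B \<in> carrier_mat p q" and "C \<in> carrier_mat q q"
  shows "saddle_mat A B C \<in> carrier_mat (p + q) (p + q)"
  using assms mat_adjoint_carrier[of B] by (simp add: saddle_mat_def)

lemma saddle_mat_mult_append_vec:
  assumes A: "A \<in> carrier_mat p p" and B: "B \<in> carrier_mat p q" and C: "C \<in> carrier_mat q q"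
    and x: "x \<in> carrier_vec p" and y: "y \<in> carrier_vec q"
  shows "saddle_mat A B C *\<^sub>v (x @\<^sub>v y) = (A *\<^sub>v x + B *\<^sub>v y) @\<^sub>v (mat_adjoint B *\<^sub>v x - C *\<^sub>v y)"
proof -
  have "(- C) *\<^sub>v y = - (C *\<^sub>v y)" using C y by simp
  then show ?thesis
    using four_block_mat_mult_vec[OF A B mat_adjoint_carrier[OF B] uminus_carrier_mat[OF C] x y]
      C y mat_adjoint_carrier[OF B] x
    by (simp add: saddle_mat_def minus_add_uminus_vec[of _ q])
qed

lemma saddle_mat_mult_vec_eq_0_iff:
  assumes A: "A \<in> carrier_mat p p" and B: "B \<in> carrier_mat p q" and C: "C \<in> carrier_mat q q"
    and psd_A: "psd_mat A" and psd_C: "psd_mat C"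
    and x: "x \<in> carrier_vec p" and y: "y \<in> carrier_vec q"
  shows "saddle_mat A B C *\<^sub>v (x @\<^sub>v y) = 0\<^sub>v (p + q) \<longleftrightarrow>
    A *\<^sub>v x = 0\<^sub>v p \<and> B *\<^sub>v y = 0\<^sub>v p \<and> mat_adjoint B *\<^sub>v x = 0\<^sub>v q \<and> C *\<^sub>v y = 0\<^sub>v q"
    (is "?lhs \<longleftrightarrow> ?rhs")
proof
  have B': "mat_adjoint B \<in> carrier_mat q p" using B by (rule mat_adjoint_carrier)
  assume ?lhs
  then have first: "A *\<^sub>v x + B *\<^sub>v y = 0\<^sub>v p" and second: "mat_adjoint B *\<^sub>v x = C *\<^sub>v y"
    using A B B' C x y
    unfolding saddle_mat_mult_append_vec[OF A B C x y] append_zero_vec[symmetric]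
    by (simp_all add: append_vec_eq[of _ p] minus_vec_eq_0_iff[of _ q])
  have "(A *\<^sub>v x) \<bullet>c x + (B *\<^sub>v y) \<bullet>c x = 0" (is "?a + ?b = 0")
    using arg_cong[OF first, of "\<lambda>v. v \<bullet>c x"] A B x y
    by (simp add: add_scalar_prod_distrib[of _ p])
  moreover have "?b = conjugate ((C *\<^sub>v y) \<bullet>c y)"
    using cscalar_prod_mat_adjoint[OF B x y] cscalar_prod_swap[of y q "C *\<^sub>v y"] second C y
    by simp
  ultimately have "Re ((A *\<^sub>v x) \<bullet>c x) + Re ((C *\<^sub>v y) \<bullet>c y) = 0"
    by (metis cnj.sel(1) conjugate_complex_def plus_complex.sel(1) zero_complex.sel(1))
  moreover have "0 \<le> Re ((A *\<^sub>v x) \<bullet>c x)" "0 \<le> Re ((C *\<^sub>v y) \<bullet>c y)"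
    using psd_A psd_C x y psd_mat_iff[OF A] psd_mat_iff[OF C] by auto
  ultimately have "A *\<^sub>v x = 0\<^sub>v p" "C *\<^sub>v y = 0\<^sub>v q"
    using psd_mat_mult_vec_eq_0[OF A psd_A x] psd_mat_mult_vec_eq_0[OF C psd_C y] by auto
  then show ?rhs using first second A B x y by (auto simp: vec_eq_iff)
next
  assume ?rhs
  then show ?lhs
    by (simp add: saddle_mat_mult_append_vec[OF A B C x y] append_zero_vec)
qed

lemma mem_mat_kernel_saddle_mat_iff:
  assumes A: "A \<in> carrier_mat p p" and B: "B \<in> carrier_mat p q" and C: "C \<in> carrier_mat q q"
    and psd_A: "psd_mat A" and psd_C: "psd_mat C"
  shows "v \<in> mat_kernel (saddle_mat A B C) \<longleftrightarrow> v \<in> carrier_vec (p + q) \<and>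
    A *\<^sub>v vec_first v p = 0\<^sub>v p \<and> B *\<^sub>v vec_last v q = 0\<^sub>v p \<and>
    mat_adjoint B *\<^sub>v vec_first v p = 0\<^sub>v q \<and> C *\<^sub>v vec_last v q = 0\<^sub>v q"
proof (cases "v \<in> carrier_vec (p + q)")
  case True
  then have "v = vec_first v p @\<^sub>v vec_last v q" by (simp add: vec_first_last_append)
  then show ?thesis
    using saddle_mat_mult_vec_eq_0_iff[OF A B C psd_A psd_C, of "vec_first v p" "vec_last v q"] True
    by (simp add: mat_kernel[OF saddle_mat_carrier[OF A B C]])
next
  case False
  then show ?thesis using mat_kernel_carrier[OF saddle_mat_carrier[OF A B C]] by auto
qed

theorem corollary2p3:
  fixes A B C :: "complex mat" and p q :: nat and t :: real
  assumes "A \<in> carrier_mat p p" and "C \<in> carrier_mat q q" and "B \<in> carrier_mat p q"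
    and "psd_mat A" and "psd_mat C" and "t > 0"
  shows "mat_kernel (saddle_mat (complex_of_real t \<cdot>\<^sub>m A) B C) = mat_kernel (saddle_mat A B C) \<and>
         mat_kernel (saddle_mat A (complex_of_real t \<cdot>\<^sub>m B) C) = mat_kernel (saddle_mat A B C) \<and>
         mat_kernel (saddle_mat A B (complex_of_real t \<cdot>\<^sub>m C)) = mat_kernel (saddle_mat A B C)"
proof -
  note A = assms(1) and C = assms(2) and B = assms(3) and psd_A = assms(4) and psd_C = assms(5)
  note kernel_iff = mem_mat_kernel_saddle_mat_iff
  let ?t = "complex_of_real t"
  have t: "?t \<noteq> 0" using \<open>t > 0\<close> by simp
  have tA: "?t \<cdot>\<^sub>m A \<in> carrier_mat p p" and tB: "?t \<cdot>\<^sub>m B \<in> carrier_mat p q"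
    and tC: "?t \<cdot>\<^sub>m C \<in> carrier_mat q q" using A B C by auto
  have psd_tA: "psd_mat (?t \<cdot>\<^sub>m A)" and psd_tC: "psd_mat (?t \<cdot>\<^sub>m C)"
    using psd_mat_smult A C psd_A psd_C \<open>t > 0\<close> by auto
  have adj_tB: "mat_adjoint (?t \<cdot>\<^sub>m B) = ?t \<cdot>\<^sub>m mat_adjoint B"
    using mat_adjoint_smult[OF B] by simp
  have "v \<in> mat_kernel (saddle_mat (?t \<cdot>\<^sub>m A) B C) \<longleftrightarrow> v \<in> mat_kernel (saddle_mat A B C)" for v
    by (simp add: kernel_iff[OF tA B C psd_tA psd_C] kernel_iff[OF A B C psd_A psd_C]
        smult_mat_mult_vec_eq_0_iff[OF t A])
  moreover have "v \<in> mat_kernel (saddle_mat A (?t \<cdot>\<^sub>m B) C) \<longleftrightarrow> v \<in> mat_kernel (saddle_mat A B C)" for v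
    by (simp add: kernel_iff[OF A tB C psd_A psd_C] kernel_iff[OF A B C psd_A psd_C] adj_tB
        smult_mat_mult_vec_eq_0_iff[OF t B] smult_mat_mult_vec_eq_0_iff[OF t mat_adjoint_carrier[OF B]])
  moreover have "v \<in> mat_kernel (saddle_mat A B (?t \<cdot>\<^sub>m C)) \<longleftrightarrow> v \<in> mat_kernel (saddle_mat A B C)" for v
    by (simp add: kernel_iff[OF A B tC psd_A psd_tC] kernel_iff[OF A B C psd_A psd_C]
        smult_mat_mult_vec_eq_0_iff[OF t C])
  ultimately show ?thesis by blast
qed

end
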